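(* Let $O=\langle B,E,F,\mathsf c\rangle$ be an occurrence net and let $\mathcal C(O)=\langle S,E,F',I,\emptyset,\mathsf m,\ell\rangle$ be the associated net, where $S=\{(\ast,e)\mid e\in E\}\cup\{(e,\ast)\mid e\in E\}\cup\{\{e,e'\}\mid e\ \#\ e'\}$, $F'=\{((\ast,e),e)\mid e\in E\}\cup\{(s,e)\mid s=\{e,e'\}\in S\}\cup\{(e,(e,\ast))\mid e\in E\}$, $I=\{((\ast,e'),e)\mid e'<_O e\}$, $\mathsf m(s)=0$ if $s=(e,\ast)$ and $\mathsf m(s)=1$ otherwise, and $\ell$ is the identity. Then $\mathcal C(O)$ is an occurrence causal net.
   Context: Occurrence nets: a net $\langle S,T,F,\mathsf m\rangle$ has disjoint places/transitions, flow $F$, initial marking $\mathsf m$; ${}^\bullet x,x^\bullet$ pre/postsets; $t$ enabled at $m$ if ${}^\bullet t\subseteq m$, firing gives $m-{}^\bullet t+t^\bullet$. $<_N$ is the transitive closure of $F$, $\le_N$ its reflexive closure; acyclic means $\le_N$ is a partial order; safe means at most one token per place in reachable markings. An occurrence net $O=\langle B,E,F,\mathsf c\rangle$ is an acyclic safe net with: ${}^\bullet b$ empty or a singleton, ${}^\bullet b=\emptyset$ for $b\in\mathsf c$; each $b$ has some $b'\in\mathsf c$ with $b'\le_O b$; $\{e'\mid e'\le_O e\}$ finite; and $\#$ (with $e\ \#_0\ e'$ iff $e\neq e'$ and ${}^\bullet e\cap{}^\bullet e'\neq\emptyset$; $x\ \#\ x'$ iff $y\ \#_0\ y'$ for some $y\le_O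 x$, $y'\le_O x'$) irreflexive. Contextual/causal nets: a labelled contextual net $N=\langle S,T,F,I,R,\mathsf m,\ell\rangle$ has inhibitor arcs $I\subseteq S\times T$, read arcs $R\subseteq S\times T$, labelling $\ell:T\to L$; ${}^\circ t=\{s\mid(s,t)\in I\}$, $\underline t=\{s\mid(s,t)\in R\}$; every transition has nonempty preset; $t$ enabled at $m$ if ${}^\bullet t+\underline t\subseteq m$ and $m(s)=0$ for $s\in{}^\circ t$; firing gives $m-{}^\bullet t+t^\bullet$. States are multisets of transitions of finite firing sequences from $\mathsf m$, $\lfloor X\rfloor$ the support. Nets are assumed safe. $t\prec_N t'$ iff ${}^\bullet t\cap{}^\circ t'\neq\emptyset$ or $t^\bullet\cap\underline{t'}\neq\emptyset$; $t\ \#_N\ t'$ iff no state contains both in its support. Pre-causal: (1) $<_N\cap(T\times T)=\emptyset$, ${}^\bullet t\cap{}^\circ t=\emptyset$, $t^\bullet\cap\underline t=\emptyset$; (2) $|\ell(s^\bullet)|=1$ for $s\in{}^\circ t$; (3) $t\prec_N t'\Rightarrow$ not $t'\prec_N t$; (4) ${}^\circ t\cup\underline t$ finite; (5) $t\ \#_N\ t'\Rightarrow {}^\bullet t\cap{}^\bullet t'\neq\emptyset$; (6) $t\neq t'$, $\ell(t)=\ell(t')\Rightarrow t\ \#_N\ t'$. Causal net: pre-causal and (a) $\prec^*$ restricted to the support of each state is a partial order, (b) every transition is in the support of some state. An occurrence causal net is a causal net $K$ with $R=\emptyset$, $\ell$ injective, $\prec_K^{*}$ a partial order on all of $T$, and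 such that $t\ \#_K\ t'$ and $t'\prec_K^{*}t''$ imply $t\ \#_K\ t''$. *)

theory Defs
  imports Main "HOL-Library.Multiset"
begin

text \<open>The flow relation F is a relation on nodes (Inl = place, Inr = transition).
  Inhibitor and read arcs are relations between places and transitions.
  Markings are functions from places to nat.\<close>

definition preset :: "('s + 't) rel \<Rightarrow> 't \<Rightarrow> 's set" where
  "preset F t = {s. (Inl s, Inr t) \<in> F}"

definition postset :: "('s + 't) rel \<Rightarrow> 't \<Rightarrow> 's set" where
  "postset F t = {s. (Inr t, Inl s) \<in> F}"

definition pl_preset :: "('s + 't) rel \<Rightarrow> 's \<Rightarrow> 't set" where
  "pl_preset F s = {t. (Inr t, Inl s) \<in> F}"

definition pl_postset :: "('s + 't) rel \<Rightarrow> 's \<Rightarrow> 't set" where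
  "pl_postset F s = {t. (Inl s, Inr t) \<in> F}"

definition inhset :: "('s \<times> 't) set \<Rightarrow> 't \<Rightarrow> 's set" where
  "inhset I t = {s. (s, t) \<in> I}"

definition readset :: "('s \<times> 't) set \<Rightarrow> 't \<Rightarrow> 's set" where
  "readset R t = {s. (s, t) \<in> R}"

definition is_net :: "'s set \<Rightarrow> 't set \<Rightarrow> ('s + 't) rel \<Rightarrow> ('s \<Rightarrow> nat) \<Rightarrow> bool" where
  "is_net S T F m \<longleftrightarrow>
     F \<subseteq> (Inl ` S \<times> Inr ` T) \<union> (Inr ` T \<times> Inl ` S) \<and> (\<forall>s. 0 < m s \<longrightarrow> s \<in> S)"

definition enabled :: "'t set \<Rightarrow> ('s + 't) rel \<Rightarrow> ('s \<times> 't) set \<Rightarrow> ('s \<times> 't) set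
    \<Rightarrow> ('s \<Rightarrow> nat) \<Rightarrow> 't \<Rightarrow> bool" where
  "enabled T F I R m t \<longleftrightarrow> t \<in> T \<and>
     (\<forall>s. (if s \<in> preset F t then 1 else 0) + (if s \<in> readset R t then 1 else 0) \<le> m s) \<and>
     (\<forall>s \<in> inhset I t. m s = 0)"

definition fire :: "('s + 't) rel \<Rightarrow> ('s \<Rightarrow> nat) \<Rightarrow> 't \<Rightarrow> ('s \<Rightarrow> nat)" where
  "fire F m t = (\<lambda>s. m s - (if s \<in> preset F t then 1 else 0) + (if s \<in> postset F t then 1 else 0))"

inductive fseq :: "'t set \<Rightarrow> ('s + 't) rel \<Rightarrow> ('s \<times> 't) set \<Rightarrow> ('s \<times> 't) set
    \<Rightarrow> ('s \<Rightarrow> nat) \<Rightarrow> 't list \<Rightarrow> ('s \<Rightarrow> nat) \<Rightarrow> bool"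
  for T F I R m0 where
  fseq_Nil: "fseq T F I R m0 [] m0"
| fseq_snoc: "fseq T F I R m0 \<sigma> m \<Longrightarrow> enabled T F I R m t \<Longrightarrow> fseq T F I R m0 (\<sigma> @ [t]) (fire F m t)"

definition reach_markings :: "'t set \<Rightarrow> ('s + 't) rel \<Rightarrow> ('s \<times> 't) set \<Rightarrow> ('s \<times> 't) set
    \<Rightarrow> ('s \<Rightarrow> nat) \<Rightarrow> ('s \<Rightarrow> nat) set" where
  "reach_markings T F I R m0 = {m. \<exists>\<sigma>. fseq T F I R m0 \<sigma> m}"

definition states :: "'t set \<Rightarrow> ('s + 't) rel \<Rightarrow> ('s \<times> 't) set \<Rightarrow> ('s \<times> 't) set
    \<Rightarrow> ('s \<Rightarrow> nat) \<Rightarrow> 't multiset set" where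
  "states T F I R m0 = {mset \<sigma> | \<sigma>. \<exists>m. fseq T F I R m0 \<sigma> m}"

definition safe_net :: "'t set \<Rightarrow> ('s + 't) rel \<Rightarrow> ('s \<times> 't) set \<Rightarrow> ('s \<times> 't) set
    \<Rightarrow> ('s \<Rightarrow> nat) \<Rightarrow> bool" where
  "safe_net T F I R m0 \<longleftrightarrow> (\<forall>m \<in> reach_markings T F I R m0. \<forall>s. m s \<le> 1)"

definition marking_of_set :: "'b set \<Rightarrow> 'b \<Rightarrow> nat" where
  "marking_of_set c = (\<lambda>b. if b \<in> c then 1 else 0)"

definition occ_conflict0 :: "'e set \<Rightarrow> ('b + 'e) rel \<Rightarrow> 'e \<Rightarrow> 'e \<Rightarrow> bool" where
  "occ_conflict0 E F e e' \<longleftrightarrow> e \<in> E \<and> e' \<in> E \<and> e \<noteq> e' \<and> preset F e \<inter> preset F e' \<noteq> {}"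

text \<open>x # x' iff y #0 y' for some y \<le>_O x, y' \<le>_O x' (\<le>_O = F^*).\<close>
definition occ_conflict :: "'e set \<Rightarrow> ('b + 'e) rel \<Rightarrow> ('b + 'e) \<Rightarrow> ('b + 'e) \<Rightarrow> bool" where
  "occ_conflict E F x x' \<longleftrightarrow>
     (\<exists>y y'. (Inr y, x) \<in> F\<^sup>* \<and> (Inr y', x') \<in> F\<^sup>* \<and> occ_conflict0 E F y y')"

definition occurrence_net :: "'b set \<Rightarrow> 'e set \<Rightarrow> ('b + 'e) rel \<Rightarrow> 'b set \<Rightarrow> bool" where
  "occurrence_net B E F c \<longleftrightarrow>
     is_net B E F (marking_of_set c) \<and>
     partial_order_on (Inl ` B \<union> Inr ` E) (Restr (F\<^sup>*) (Inl ` B \<union> Inr ` E)) \<and>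
     safe_net E F {} {} (marking_of_set c) \<and>
     (\<forall>b \<in> B. pl_preset F b = {} \<or> (\<exists>e. pl_preset F b = {e})) \<and>
     (\<forall>b \<in> c. pl_preset F b = {}) \<and>
     (\<forall>b \<in> B. \<exists>b' \<in> c. (Inl b', Inl b) \<in> F\<^sup>*) \<and>
     (\<forall>e \<in> E. finite {e'. (Inr e', Inr e) \<in> F\<^sup>*}) \<and>
     (\<forall>x. \<not> occ_conflict E F x x)"

definition contextual_net :: "'s set \<Rightarrow> 't set \<Rightarrow> ('s + 't) rel \<Rightarrow> ('s \<times> 't) set \<Rightarrow> ('s \<times> 't) set
    \<Rightarrow> ('s \<Rightarrow> nat) \<Rightarrow> ('t \<Rightarrow> 'l) \<Rightarrow> bool" where
  "contextual_net S T F I R m lab \<longleftrightarrow>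
     is_net S T F m \<and> I \<subseteq> S \<times> T \<and> R \<subseteq> S \<times> T \<and>
     (\<forall>t \<in> T. preset F t \<noteq> {}) \<and> safe_net T F I R m"

definition prec :: "('s + 't) rel \<Rightarrow> ('s \<times> 't) set \<Rightarrow> ('s \<times> 't) set \<Rightarrow> 't \<Rightarrow> 't \<Rightarrow> bool" where
  "prec F I R t t' \<longleftrightarrow> preset F t \<inter> inhset I t' \<noteq> {} \<or> postset F t \<inter> readset R t' \<noteq> {}"

definition prec_rel :: "'t set \<Rightarrow> ('s + 't) rel \<Rightarrow> ('s \<times> 't) set \<Rightarrow> ('s \<times> 't) set \<Rightarrow> 't rel" where
  "prec_rel T F I R = {(t, t'). t \<in> T \<and> t' \<in> T \<and> prec F I R t t'}"

definition cn_conflict :: "'t set \<Rightarrow> ('s + 't) rel \<Rightarrow> ('s \<times> 't) set \<Rightarrow> ('s \<times> 't) set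
    \<Rightarrow> ('s \<Rightarrow> nat) \<Rightarrow> 't \<Rightarrow> 't \<Rightarrow> bool" where
  "cn_conflict T F I R m t t' \<longleftrightarrow> \<not> (\<exists>X \<in> states T F I R m. t \<in># X \<and> t' \<in># X)"

definition pre_causal :: "'s set \<Rightarrow> 't set \<Rightarrow> ('s + 't) rel \<Rightarrow> ('s \<times> 't) set \<Rightarrow> ('s \<times> 't) set
    \<Rightarrow> ('s \<Rightarrow> nat) \<Rightarrow> ('t \<Rightarrow> 'l) \<Rightarrow> bool" where
  "pre_causal S T F I R m lab \<longleftrightarrow>
     contextual_net S T F I R m lab \<and>
     (\<forall>t \<in> T. \<forall>t' \<in> T. (Inr t, Inr t') \<notin> F\<^sup>+) \<and>
     (\<forall>t \<in> T. preset F t \<inter> inhset I t = {} \<and> postset F t \<inter> readset R t = {}) \<and>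
     (\<forall>t \<in> T. \<forall>s \<in> inhset I t. card (lab ` pl_postset F s) = 1) \<and>
     (\<forall>t \<in> T. \<forall>t' \<in> T. prec F I R t t' \<longrightarrow> \<not> prec F I R t' t) \<and>
     (\<forall>t \<in> T. finite (inhset I t \<union> readset R t)) \<and>
     (\<forall>t \<in> T. \<forall>t' \<in> T. cn_conflict T F I R m t t' \<longrightarrow> preset F t \<inter> preset F t' \<noteq> {}) \<and>
     (\<forall>t \<in> T. \<forall>t' \<in> T. t \<noteq> t' \<and> lab t = lab t' \<longrightarrow> cn_conflict T F I R m t t')"

definition causal_net :: "'s set \<Rightarrow> 't set \<Rightarrow> ('s + 't) rel \<Rightarrow> ('s \<times> 't) set \<Rightarrow> ('s \<times> 't) set
    \<Rightarrow> ('s \<Rightarrow> nat) \<Rightarrow> ('t \<Rightarrow> 'l) \<Rightarrow> bool" where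
  "causal_net S T F I R m lab \<longleftrightarrow>
     pre_causal S T F I R m lab \<and>
     (\<forall>X \<in> states T F I R m.
        partial_order_on (set_mset X) (Restr ((prec_rel T F I R)\<^sup>*) (set_mset X))) \<and>
     (\<forall>t \<in> T. \<exists>X \<in> states T F I R m. t \<in># X)"

definition occurrence_causal_net :: "'s set \<Rightarrow> 't set \<Rightarrow> ('s + 't) rel \<Rightarrow> ('s \<times> 't) set
    \<Rightarrow> ('s \<times> 't) set \<Rightarrow> ('s \<Rightarrow> nat) \<Rightarrow> ('t \<Rightarrow> 'l) \<Rightarrow> bool" where
  "occurrence_causal_net S T F I R m lab \<longleftrightarrow>
     causal_net S T F I R m lab \<and> R = {} \<and> inj_on lab T \<and>
     partial_order_on T (Restr ((prec_rel T F I R)\<^sup>*) T) \<and>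
     (\<forall>t \<in> T. \<forall>t' \<in> T. \<forall>t'' \<in> T.
        cn_conflict T F I R m t t' \<and> (t', t'') \<in> (prec_rel T F I R)\<^sup>* \<longrightarrow> cn_conflict T F I R m t t'')"

text \<open>PreP e = (*,e), PostP e = (e,*), ConflP {e,e'} for e # e'.\<close>
datatype 'e cplace = PreP 'e | PostP 'e | ConflP "'e set"

definition CO_S :: "'e set \<Rightarrow> ('b + 'e) rel \<Rightarrow> 'e cplace set" where
  "CO_S E F = PreP ` E \<union> PostP ` E \<union>
     {ConflP {e, e'} | e e'. e \<in> E \<and> e' \<in> E \<and> occ_conflict E F (Inr e) (Inr e')}"

definition CO_F :: "'e set \<Rightarrow> ('b + 'e) rel \<Rightarrow> ('e cplace + 'e) rel" where
  "CO_F E F = {(Inl (PreP e), Inr e) | e. e \<in> E}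
     \<union> {(Inl s, Inr e) | s e e'. s = ConflP {e, e'} \<and> s \<in> CO_S E F}
     \<union> {(Inr e, Inl (PostP e)) | e. e \<in> E}"

definition CO_I :: "'e set \<Rightarrow> ('b + 'e) rel \<Rightarrow> ('e cplace \<times> 'e) set" where
  "CO_I E F = {(PreP e', e) | e e'. e \<in> E \<and> e' \<in> E \<and> (Inr e', Inr e) \<in> F\<^sup>+}"

definition CO_m :: "'e set \<Rightarrow> ('b + 'e) rel \<Rightarrow> 'e cplace \<Rightarrow> nat" where
  "CO_m E F s = (if s \<in> CO_S E F \<and> (\<forall>e. s \<noteq> PostP e) then 1 else 0)"

end

theory Submission
  imports Defs
begin

text \<open>A firing sequence of C(O) fires every event at most once, and the marking it reaches
  depends only on the set \<open>A\<close> of fired events. An event \<open>e\<close> is enabled there iff \<open>e \<notin> A\<close>,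
  \<open>e\<close> is in conflict with no event of \<open>A\<close> (the conflict places \<open>{e, e'}\<close> it consumes are still
  marked), and its causal past lies in \<open>A\<close> (the inhibiting places \<open>(*, e')\<close>, \<open>e' <\<^sub>O e\<close>, are
  empty). So the sets of fired events are exactly the finite causally closed conflict-free
  sets, each reached by firing its events in an order compatible with \<open><\<^sub>O\<close>. Hence two events
  occur in a common state iff they are not in conflict, i.e. the conflict of C(O) is \<open>#\<close>, while
  \<open>\<prec>\<close> is \<open><\<^sub>O\<close> on events, a partial order along which \<open>#\<close> is inherited.\<close>

lemma occ_conflict_sym: "occ_conflict E F x y \<Longrightarrow> occ_conflict E F y x"
  unfolding occ_conflict_def occ_conflict0_def by blast

lemma occ_conflict_rtrancl: "occ_conflict E F x y \<Longrightarrow> (y, z) \<in> F\<^sup>* \<Longrightarrow> occ_conflict E F x z"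
  unfolding occ_conflict_def by (meson rtrancl_trans)

lemma acyclic_finite_has_maximal:
  assumes "acyclic R" "finite A" "A \<noteq> {}"
  shows "\<exists>x\<in>A. \<forall>y\<in>A. (x, y) \<notin> R\<^sup>+"
proof -
  let ?R = "Restr (R\<^sup>+) A"
  have "finite ?R" using assms(2) by (simp add: finite_subset[of _ "A \<times> A"])
  moreover have "acyclic (R\<^sup>+)" using assms(1) by (simp add: acyclic_def)
  then have "acyclic ?R" by (rule acyclic_subset) auto
  ultimately have "wf (?R\<inverse>)" by (rule finite_acyclic_wf_converse)
  moreover obtain a where "a \<in> A" using assms(3) by blast
  ultimately show ?thesis
  proof (rule wfE_min)
    fix x assume "x \<in> A" "\<And>y. (y, x) \<in> ?R\<inverse> \<Longrightarrow> y \<notin> A"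
    then show ?thesis by blast
  qed
qed

lemma acyclic_partial_order_on_rtrancl: "acyclic R \<Longrightarrow> partial_order_on A (Restr (R\<^sup>*) A)"
  unfolding partial_order_on_def preorder_on_def
  by (simp add: refl_on_def trans_Restr[OF trans_rtrancl] antisym_Restr acyclic_impl_antisym_rtrancl)

lemma occurrence_net_acyclic:
  assumes "occurrence_net B E F c"
  shows "acyclic F"
proof (rule acyclicI, intro allI notI)
  fix x assume "(x, x) \<in> F\<^sup>+"
  then obtain z where z: "(x, z) \<in> F" "(z, x) \<in> F\<^sup>*" by (auto dest: tranclD)
  let ?D = "Inl ` B \<union> Inr ` E"
  have F_bipartite: "F \<subseteq> Inl ` B \<times> Inr ` E \<union> Inr ` E \<times> Inl ` B"
    and "antisym (Restr (F\<^sup>*) ?D)"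
    using assms by (simp_all add: occurrence_net_def is_net_def partial_order_on_def)
  moreover have "(x, z) \<in> Restr (F\<^sup>*) ?D" "(z, x) \<in> Restr (F\<^sup>*) ?D"
    using z F_bipartite by auto
  ultimately have "x = z" by (auto dest: antisymD)
  with z(1) F_bipartite show False by auto
qed

lemma occurrence_net_conflict_irrefl: "occurrence_net B E F c \<Longrightarrow> \<not> occ_conflict E F x x"
  by (simp add: occurrence_net_def)

lemma occurrence_net_finite_past:
  "occurrence_net B E F c \<Longrightarrow> e \<in> E \<Longrightarrow> finite {e'. (Inr e', Inr e) \<in> F\<^sup>*}"
  by (simp add: occurrence_net_def)

lemma CO_S_PreP [simp]: "PreP e \<in> CO_S E F \<longleftrightarrow> e \<in> E"
  and CO_S_PostP [simp]: "PostP e \<in> CO_S E F \<longleftrightarrow> e \<in> E"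
  by (auto simp: CO_S_def)

lemma CO_S_ConflP:
  "ConflP X \<in> CO_S E F \<longleftrightarrow> (\<exists>a b. X = {a, b} \<and> a \<in> E \<and> b \<in> E \<and> occ_conflict E F (Inr a) (Inr b))"
  by (auto simp: CO_S_def)

lemma CO_S_ConflP_subset: "ConflP X \<in> CO_S E F \<Longrightarrow> X \<subseteq> E"
  by (auto simp: CO_S_ConflP)

lemma preset_CO_F_PreP [simp]: "PreP e \<in> preset (CO_F E F) t \<longleftrightarrow> e = t \<and> t \<in> E"
  and preset_CO_F_PostP [simp]: "PostP e \<notin> preset (CO_F E F) t"
  and preset_CO_F_ConflP: "ConflP X \<in> preset (CO_F E F) t \<longleftrightarrow> t \<in> X \<and> ConflP X \<in> CO_S E F"
  by (auto simp: preset_def CO_F_def CO_S_ConflP insert_commute)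

lemma postset_CO_F_PostP [simp]: "PostP e \<in> postset (CO_F E F) t \<longleftrightarrow> e = t \<and> t \<in> E"
  and postset_CO_F_PreP [simp]: "PreP e \<notin> postset (CO_F E F) t"
  and postset_CO_F_ConflP [simp]: "ConflP X \<notin> postset (CO_F E F) t"
  by (auto simp: postset_def CO_F_def)

lemma inhset_CO_I_PreP [simp]:
    "PreP e \<in> inhset (CO_I E F) t \<longleftrightarrow> t \<in> E \<and> e \<in> E \<and> (Inr e, Inr t) \<in> F\<^sup>+"
  and inhset_CO_I_PostP [simp]: "PostP e \<notin> inhset (CO_I E F) t"
  and inhset_CO_I_ConflP [simp]: "ConflP X \<notin> inhset (CO_I E F) t"
  by (auto simp: inhset_def CO_I_def)

lemma pl_postset_CO_F_PreP: "e \<in> E \<Longrightarrow> pl_postset (CO_F E F) (PreP e) = {e}"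
  by (auto simp: pl_postset_def CO_F_def)

lemma CO_F_trancl_no_transitions: "(Inr t, Inr t') \<notin> (CO_F E F)\<^sup>+"
proof
  assume "(Inr t, Inr t') \<in> (CO_F E F)\<^sup>+"
  then obtain z where z: "(Inr t, z) \<in> CO_F E F" "(z, Inr t') \<in> (CO_F E F)\<^sup>*"
    by (auto dest: tranclD)
  from z(1) have "z = Inl (PostP t)" by (auto simp: CO_F_def)
  with z(2) show False by (auto elim: converse_rtranclE simp: CO_F_def)
qed

lemma is_net_CO: "is_net (CO_S E F) E (CO_F E F) (CO_m E F)"
  by (auto simp: is_net_def CO_F_def CO_m_def dest: CO_S_ConflP_subset split: if_splits)

definition CO_marking :: "'e set \<Rightarrow> ('b + 'e) rel \<Rightarrow> 'e set \<Rightarrow> 'e cplace \<Rightarrow> nat" where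
  "CO_marking E F A s = (case s of
       PreP e \<Rightarrow> if e \<in> E \<and> e \<notin> A then 1 else 0
     | PostP e \<Rightarrow> if e \<in> A then 1 else 0
     | ConflP X \<Rightarrow> if ConflP X \<in> CO_S E F \<and> X \<inter> A = {} then 1 else 0)"

definition causally_closed :: "'e set \<Rightarrow> ('b + 'e) rel \<Rightarrow> 'e set \<Rightarrow> bool" where
  "causally_closed E F A \<longleftrightarrow> (\<forall>e\<in>A. \<forall>e'\<in>E. (Inr e', Inr e) \<in> F\<^sup>+ \<longrightarrow> e' \<in> A)"

definition conflict_free :: "'e set \<Rightarrow> ('b + 'e) rel \<Rightarrow> 'e set \<Rightarrow> bool" where
  "conflict_free E F A \<longleftrightarrow> (\<forall>a\<in>A. \<forall>b\<in>A. \<not> occ_conflict E F (Inr a) (Inr b))"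

lemma CO_m_eq_CO_marking_empty: "CO_m E F = CO_marking E F {}"
  by (auto simp: CO_m_def CO_marking_def split: cplace.split)

lemma CO_marking_le_1: "CO_marking E F A s \<le> 1"
  by (simp add: CO_marking_def split: cplace.split)

lemma conflict_places_unmarked_iff:
  assumes "A \<subseteq> E" "t \<in> E" "t \<notin> A"
  shows "(\<forall>X. ConflP X \<in> preset (CO_F E F) t \<longrightarrow> X \<inter> A = {})
    \<longleftrightarrow> (\<forall>a\<in>A. \<not> occ_conflict E F (Inr t) (Inr a))"
proof (intro iffI ballI notI allI impI)
  fix a assume unmarked: "\<forall>X. ConflP X \<in> preset (CO_F E F) t \<longrightarrow> X \<inter> A = {}"
    and "a \<in> A" "occ_conflict E F (Inr t) (Inr a)"
  then have "ConflP {t, a} \<in> CO_S E F"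
    using assms(1,2) unfolding CO_S_ConflP by blast
  then have "ConflP {t, a} \<in> preset (CO_F E F) t" by (simp add: preset_CO_F_ConflP)
  with unmarked \<open>a \<in> A\<close> show False by blast
next
  fix X assume "\<forall>a\<in>A. \<not> occ_conflict E F (Inr t) (Inr a)" "ConflP X \<in> preset (CO_F E F) t"
  with assms(3) show "X \<inter> A = {}"
    by (auto simp: preset_CO_F_ConflP CO_S_ConflP dest: occ_conflict_sym)
qed

lemma enabled_CO_marking_iff:
  assumes "A \<subseteq> E"
  shows "enabled E (CO_F E F) (CO_I E F) {} (CO_marking E F A) t \<longleftrightarrow>
    t \<in> E \<and> t \<notin> A \<and> (\<forall>a\<in>A. \<not> occ_conflict E F (Inr t) (Inr a)) \<and>
    (\<forall>e\<in>E. (Inr e, Inr t) \<in> F\<^sup>+ \<longrightarrow> e \<in> A)"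
proof -
  have enabled: "enabled E (CO_F E F) (CO_I E F) {} (CO_marking E F A) t \<longleftrightarrow>
      t \<in> E \<and> (\<forall>s\<in>preset (CO_F E F) t. CO_marking E F A s = 1) \<and>
      (\<forall>s\<in>inhset (CO_I E F) t. CO_marking E F A s = 0)"
  proof -
    have "1 \<le> CO_marking E F A s \<longleftrightarrow> CO_marking E F A s = 1" for s
      using CO_marking_le_1[of E F A s] by linarith
    then show ?thesis by (auto simp: enabled_def readset_def)
  qed
  have preset_marked: "(\<forall>s\<in>preset (CO_F E F) t. CO_marking E F A s = 1) \<longleftrightarrow>
      t \<notin> A \<and> (\<forall>a\<in>A. \<not> occ_conflict E F (Inr t) (Inr a))" if "t \<in> E"
  proof -
    have "(\<forall>s\<in>preset (CO_F E F) t. CO_marking E F A s = 1) \<longleftrightarrow>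
        CO_marking E F A (PreP t) = 1 \<and>
        (\<forall>X. ConflP X \<in> preset (CO_F E F) t \<longrightarrow> CO_marking E F A (ConflP X) = 1)"
      using that by (metis cplace.exhaust preset_CO_F_PostP preset_CO_F_PreP)
    also have "\<dots> \<longleftrightarrow> t \<notin> A \<and> (\<forall>X. ConflP X \<in> preset (CO_F E F) t \<longrightarrow> X \<inter> A = {})"
      using that by (auto simp: CO_marking_def preset_CO_F_ConflP)
    finally show ?thesis
      using conflict_places_unmarked_iff[OF assms that, of F] by (simp cong: conj_cong)
  qed
  have inhibitors_unmarked: "(\<forall>s\<in>inhset (CO_I E F) t. CO_marking E F A s = 0) \<longleftrightarrow>
      (\<forall>e\<in>E. (Inr e, Inr t) \<in> F\<^sup>+ \<longrightarrow> e \<in> A)" if "t \<in> E"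
  proof -
    have "(\<forall>s\<in>inhset (CO_I E F) t. CO_marking E F A s = 0) \<longleftrightarrow>
        (\<forall>e. PreP e \<in> inhset (CO_I E F) t \<longrightarrow> CO_marking E F A (PreP e) = 0)"
      by (metis cplace.exhaust inhset_CO_I_PostP inhset_CO_I_ConflP)
    then show ?thesis
      using that by (auto simp: CO_marking_def)
  qed
  show ?thesis
    using enabled preset_marked inhibitors_unmarked by (cases "t \<in> E") simp_all
qed

lemma fire_CO_marking:
  assumes "A \<subseteq> E" "enabled E (CO_F E F) (CO_I E F) {} (CO_marking E F A) t"
  shows "fire (CO_F E F) (CO_marking E F A) t = CO_marking E F (insert t A)"
proof
  fix s
  have "t \<in> E" "t \<notin> A" "\<forall>a\<in>A. \<not> occ_conflict E F (Inr t) (Inr a)"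
    using assms(2) unfolding enabled_CO_marking_iff[OF assms(1)] by auto
  then have "\<forall>X. ConflP X \<in> preset (CO_F E F) t \<longrightarrow> X \<inter> A = {}"
    using conflict_places_unmarked_iff[OF assms(1), of t F] by auto
  with \<open>t \<in> E\<close> \<open>t \<notin> A\<close>
  show "fire (CO_F E F) (CO_marking E F A) t s = CO_marking E F (insert t A) s"
    by (cases s) (auto simp: fire_def CO_marking_def preset_CO_F_ConflP)
qed

lemma CO_fseq_marking_conflict_free:
  assumes "occurrence_net B E F c" "fseq E (CO_F E F) (CO_I E F) {} (CO_m E F) \<sigma> m"
  shows "m = CO_marking E F (set \<sigma>) \<and> set \<sigma> \<subseteq> E \<and> conflict_free E F (set \<sigma>)"
  using assms(2)
proof (induction rule: fseq.induct)
  case fseq_Nil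
  then show ?case by (simp add: CO_m_eq_CO_marking_empty conflict_free_def)
next
  case (fseq_snoc \<sigma> m t)
  then have m: "m = CO_marking E F (set \<sigma>)" and "set \<sigma> \<subseteq> E"
    and conflict_free: "conflict_free E F (set \<sigma>)" by simp_all
  with fseq_snoc.hyps(2) have enabled: "enabled E (CO_F E F) (CO_I E F) {} (CO_marking E F (set \<sigma>)) t"
    by simp
  then have "t \<in> E" and no_conflict: "\<forall>a\<in>set \<sigma>. \<not> occ_conflict E F (Inr t) (Inr a)"
    unfolding enabled_CO_marking_iff[OF \<open>set \<sigma> \<subseteq> E\<close>] by simp_all
  have "conflict_free E F (insert t (set \<sigma>))"
    using conflict_free no_conflict occurrence_net_conflict_irrefl[OF assms(1)]
    unfolding conflict_free_def by (auto dest: occ_conflict_sym)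
  moreover have "fire (CO_F E F) m t = CO_marking E F (insert t (set \<sigma>))"
    using fire_CO_marking[OF \<open>set \<sigma> \<subseteq> E\<close> enabled] m by simp
  ultimately show ?case using \<open>set \<sigma> \<subseteq> E\<close> \<open>t \<in> E\<close> by simp
qed

lemma CO_configuration_reachable:
  assumes "acyclic F"
  shows "finite A \<Longrightarrow> A \<subseteq> E \<Longrightarrow> causally_closed E F A \<Longrightarrow> conflict_free E F A \<Longrightarrow>
    \<exists>\<sigma>. set \<sigma> = A \<and> fseq E (CO_F E F) (CO_I E F) {} (CO_m E F) \<sigma> (CO_marking E F A)"
proof (induction A rule: finite_psubset_induct)
  case (psubset A)
  show ?case
  proof (cases "A = {}")
    case True
    then show ?thesis
      using fseq_Nil[of E "CO_F E F" "CO_I E F" "{}" "CO_m E F"]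
      by (simp add: CO_m_eq_CO_marking_empty)
  next
    case False
    have "\<exists>x\<in>Inr ` A. \<forall>y\<in>Inr ` A. (x, y) \<notin> F\<^sup>+"
      using psubset.hyps False by (intro acyclic_finite_has_maximal[OF assms]) simp_all
    then obtain t where "t \<in> A" and t_maximal: "\<forall>e\<in>A. (Inr t, Inr e) \<notin> F\<^sup>+"
      by auto
    let ?A = "A - {t}"
    have "causally_closed E F ?A"
      using psubset.prems(2) t_maximal unfolding causally_closed_def by blast
    moreover have "conflict_free E F ?A"
      using psubset.prems(3) unfolding conflict_free_def by blast
    ultimately obtain \<sigma> where \<sigma>: "set \<sigma> = ?A"
        "fseq E (CO_F E F) (CO_I E F) {} (CO_m E F) \<sigma> (CO_marking E F ?A)"
      using psubset.IH[of ?A] psubset.prems(1) \<open>t \<in> A\<close> by blast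
    have "?A \<subseteq> E" using psubset.prems(1) by blast
    have enabled: "enabled E (CO_F E F) (CO_I E F) {} (CO_marking E F ?A) t"
      unfolding enabled_CO_marking_iff[OF \<open>?A \<subseteq> E\<close>]
    proof (intro conjI ballI impI)
      show "t \<in> E" using \<open>t \<in> A\<close> psubset.prems(1) by blast
      show "t \<notin> ?A" by simp
      show "\<not> occ_conflict E F (Inr t) (Inr a)" if "a \<in> ?A" for a
        using psubset.prems(3) \<open>t \<in> A\<close> that unfolding conflict_free_def by blast
      show "e \<in> ?A" if "e \<in> E" "(Inr e, Inr t) \<in> F\<^sup>+" for e
        using psubset.prems(2) \<open>t \<in> A\<close> that assms unfolding causally_closed_def acyclic_def
        by blast
    qed
    with \<sigma>(2) have "fseq E (CO_F E F) (CO_I E F) {} (CO_m E F) (\<sigma> @ [t])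
        (fire (CO_F E F) (CO_marking E F ?A) t)"
      by (rule fseq_snoc)
    moreover have "fire (CO_F E F) (CO_marking E F ?A) t = CO_marking E F A"
      using fire_CO_marking[OF \<open>?A \<subseteq> E\<close> enabled] \<open>t \<in> A\<close> by (simp add: insert_absorb)
    moreover have "set (\<sigma> @ [t]) = A" using \<sigma>(1) \<open>t \<in> A\<close> by auto
    ultimately show ?thesis by (intro exI[of _ "\<sigma> @ [t]"]) simp
  qed
qed

lemma CO_common_state:
  assumes occ: "occurrence_net B E F c"
    and "t \<in> E" "t' \<in> E" and no_conflict: "\<not> occ_conflict E F (Inr t) (Inr t')"
  shows "\<exists>X\<in>states E (CO_F E F) (CO_I E F) {} (CO_m E F). t \<in># X \<and> t' \<in># X"
proof -
  let ?A = "{e\<in>E. (Inr e, Inr t) \<in> F\<^sup>*} \<union> {e\<in>E. (Inr e, Inr t') \<in> F\<^sup>*}"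
  have "finite ?A"
    using occurrence_net_finite_past[OF occ assms(2)] occurrence_net_finite_past[OF occ assms(3)]
    by (auto intro: finite_subset)
  moreover have "causally_closed E F ?A"
    unfolding causally_closed_def by (auto intro: rtrancl_trans trancl_into_rtrancl)
  moreover have "conflict_free E F ?A"
    unfolding conflict_free_def
  proof (intro ballI notI)
    fix a b assume "a \<in> ?A" "b \<in> ?A" and "occ_conflict E F (Inr a) (Inr b)"
    then obtain x y where "x \<in> {t, t'}" "y \<in> {t, t'}"
      and "(Inr a, Inr x) \<in> F\<^sup>*" "(Inr b, Inr y) \<in> F\<^sup>*" and "occ_conflict E F (Inr a) (Inr b)"
      by blast
    then have "occ_conflict E F (Inr x) (Inr y)"
      by (meson occ_conflict_rtrancl occ_conflict_sym)
    with \<open>x \<in> {t, t'}\<close> \<open>y \<in> {t, t'}\<close> show False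
      using no_conflict occurrence_net_conflict_irrefl[OF occ] occ_conflict_sym by blast
  qed
  ultimately obtain \<sigma> where "set \<sigma> = ?A"
      and "fseq E (CO_F E F) (CO_I E F) {} (CO_m E F) \<sigma> (CO_marking E F ?A)"
    using CO_configuration_reachable[OF occurrence_net_acyclic[OF occ]] by blast
  then have "mset \<sigma> \<in> states E (CO_F E F) (CO_I E F) {} (CO_m E F)"
    and "t \<in># mset \<sigma>" "t' \<in># mset \<sigma>"
    using assms(2,3) by (auto simp: states_def)
  then show ?thesis by blast
qed

lemma cn_conflict_CO_iff:
  assumes occ: "occurrence_net B E F c" and "t \<in> E" "t' \<in> E"
  shows "cn_conflict E (CO_F E F) (CO_I E F) {} (CO_m E F) t t' \<longleftrightarrow> occ_conflict E F (Inr t) (Inr t')"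
proof
  assume "cn_conflict E (CO_F E F) (CO_I E F) {} (CO_m E F) t t'"
  then show "occ_conflict E F (Inr t) (Inr t')"
    using CO_common_state[OF assms] unfolding cn_conflict_def by blast
next
  assume conflict: "occ_conflict E F (Inr t) (Inr t')"
  show "cn_conflict E (CO_F E F) (CO_I E F) {} (CO_m E F) t t'"
    unfolding cn_conflict_def
  proof
    assume "\<exists>X\<in>states E (CO_F E F) (CO_I E F) {} (CO_m E F). t \<in># X \<and> t' \<in># X"
    then obtain \<sigma> m where "fseq E (CO_F E F) (CO_I E F) {} (CO_m E F) \<sigma> m"
      and "t \<in> set \<sigma>" "t' \<in> set \<sigma>"
      unfolding states_def by auto
    with conflict show False
      using CO_fseq_marking_conflict_free[OF occ] unfolding conflict_free_def by blast
  qed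
qed

lemma prec_CO_iff:
  "prec (CO_F E F) (CO_I E F) {} t t' \<longleftrightarrow> t \<in> E \<and> t' \<in> E \<and> (Inr t, Inr t') \<in> F\<^sup>+"
proof
  assume "prec (CO_F E F) (CO_I E F) {} t t'"
  then obtain s where "s \<in> preset (CO_F E F) t" "s \<in> inhset (CO_I E F) t'"
    by (auto simp: prec_def readset_def)
  then show "t \<in> E \<and> t' \<in> E \<and> (Inr t, Inr t') \<in> F\<^sup>+" by (cases s) auto
next
  assume "t \<in> E \<and> t' \<in> E \<and> (Inr t, Inr t') \<in> F\<^sup>+"
  then have "PreP t \<in> preset (CO_F E F) t \<inter> inhset (CO_I E F) t'" by simp
  then show "prec (CO_F E F) (CO_I E F) {} t t'" unfolding prec_def by blast
qed

lemma prec_rel_CO_trancl: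
  "(t, t') \<in> (prec_rel E (CO_F E F) (CO_I E F) {})\<^sup>+ \<Longrightarrow> (Inr t, Inr t') \<in> F\<^sup>+"
  by (induction rule: trancl_induct) (auto simp: prec_rel_def prec_CO_iff intro: trancl_trans)

lemma prec_rel_CO_rtrancl:
  "(t, t') \<in> (prec_rel E (CO_F E F) (CO_I E F) {})\<^sup>* \<Longrightarrow> (Inr t, Inr t') \<in> F\<^sup>*"
  by (auto simp: rtrancl_eq_or_trancl dest: prec_rel_CO_trancl)

lemma acyclic_prec_rel_CO: "acyclic F \<Longrightarrow> acyclic (prec_rel E (CO_F E F) (CO_I E F) {})"
  by (auto simp: acyclic_def dest: prec_rel_CO_trancl)

lemma safe_net_CO:
  assumes "occurrence_net B E F c"
  shows "safe_net E (CO_F E F) (CO_I E F) {} (CO_m E F)"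
  unfolding safe_net_def reach_markings_def
  using CO_fseq_marking_conflict_free[OF assms] CO_marking_le_1 by fastforce

lemma contextual_net_CO:
  assumes "occurrence_net B E F c"
  shows "contextual_net (CO_S E F) E (CO_F E F) (CO_I E F) {} (CO_m E F) lab"
  unfolding contextual_net_def
proof (intro conjI ballI)
  show "CO_I E F \<subseteq> CO_S E F \<times> E" by (auto simp: CO_I_def)
  show "preset (CO_F E F) t \<noteq> {}" if "t \<in> E" for t
  proof -
    from that have "PreP t \<in> preset (CO_F E F) t" by simp
    then show ?thesis by blast
  qed
qed (simp_all add: is_net_CO safe_net_CO[OF assms])

lemma pre_causal_CO:
  assumes occ: "occurrence_net B E F c" and "inj_on lab E"
  shows "pre_causal (CO_S E F) E (CO_F E F) (CO_I E F) {} (CO_m E F) lab"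
proof -
  have acyclic: "acyclic F" by (rule occurrence_net_acyclic[OF occ])
  have "preset (CO_F E F) t \<inter> inhset (CO_I E F) t = {}" for t
  proof -
    have "s \<notin> inhset (CO_I E F) t" if "s \<in> preset (CO_F E F) t" for s
      using that acyclic by (cases s) (auto simp: acyclic_def)
    then show ?thesis by blast
  qed
  moreover have "card (lab ` pl_postset (CO_F E F) s) = 1" if "s \<in> inhset (CO_I E F) t" for s t
    using that by (cases s) (auto simp: pl_postset_CO_F_PreP)
  moreover have "\<not> prec (CO_F E F) (CO_I E F) {} t' t" if "prec (CO_F E F) (CO_I E F) {} t t'" for t t'
    using that acyclic by (auto simp: prec_CO_iff acyclic_def dest: trancl_trans)
  moreover have "finite (inhset (CO_I E F) t)" if "t \<in> E" for t
  proof (rule finite_subset)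
    show "inhset (CO_I E F) t \<subseteq> PreP ` {e. (Inr e, Inr t) \<in> F\<^sup>*}"
      by (auto simp: inhset_def CO_I_def)
    show "finite (PreP ` {e. (Inr e, Inr t) \<in> F\<^sup>*})"
      using occurrence_net_finite_past[OF occ that] by blast
  qed
  moreover have "preset (CO_F E F) t \<inter> preset (CO_F E F) t' \<noteq> {}"
    if "t \<in> E" "t' \<in> E" "cn_conflict E (CO_F E F) (CO_I E F) {} (CO_m E F) t t'" for t t'
  proof -
    have "occ_conflict E F (Inr t) (Inr t')"
      using that cn_conflict_CO_iff[OF occ] by blast
    with that(1,2) have "ConflP {t, t'} \<in> CO_S E F" unfolding CO_S_ConflP by blast
    then have "ConflP {t, t'} \<in> preset (CO_F E F) t \<inter> preset (CO_F E F) t'"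
      by (simp add: preset_CO_F_ConflP)
    then show ?thesis by blast
  qed
  ultimately show ?thesis
    unfolding pre_causal_def
    using contextual_net_CO[OF occ] \<open>inj_on lab E\<close>
    by (auto simp: CO_F_trancl_no_transitions readset_def inj_on_def)
qed

lemma partial_order_on_prec_rel_CO:
  assumes "occurrence_net B E F c"
  shows "partial_order_on A (Restr ((prec_rel E (CO_F E F) (CO_I E F) {})\<^sup>*) A)"
  using occurrence_net_acyclic[OF assms]
  by (intro acyclic_partial_order_on_rtrancl acyclic_prec_rel_CO)

lemma causal_net_CO:
  assumes occ: "occurrence_net B E F c" and "inj_on lab E"
  shows "causal_net (CO_S E F) E (CO_F E F) (CO_I E F) {} (CO_m E F) lab"
  unfolding causal_net_def
proof (intro conjI ballI)
  show "pre_causal (CO_S E F) E (CO_F E F) (CO_I E F) {} (CO_m E F) lab"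
    using assms by (rule pre_causal_CO)
  show "\<exists>X\<in>states E (CO_F E F) (CO_I E F) {} (CO_m E F). t \<in># X" if "t \<in> E" for t
    using CO_common_state[OF occ that that] occurrence_net_conflict_irrefl[OF occ] by blast
qed (rule partial_order_on_prec_rel_CO[OF occ])

lemma occurrence_causal_net_CO:
  assumes occ: "occurrence_net B E F c" and "inj_on lab E"
  shows "occurrence_causal_net (CO_S E F) E (CO_F E F) (CO_I E F) {} (CO_m E F) lab"
  unfolding occurrence_causal_net_def
proof (intro conjI ballI impI)
  fix t t' t'' assume "t \<in> E" "t' \<in> E" "t'' \<in> E" and
    "cn_conflict E (CO_F E F) (CO_I E F) {} (CO_m E F) t t' \<and>
     (t', t'') \<in> (prec_rel E (CO_F E F) (CO_I E F) {})\<^sup>*"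
  then show "cn_conflict E (CO_F E F) (CO_I E F) {} (CO_m E F) t t''"
    using cn_conflict_CO_iff[OF occ] occ_conflict_rtrancl prec_rel_CO_rtrancl by metis
qed (simp_all add: assms causal_net_CO[OF assms] partial_order_on_prec_rel_CO[OF occ])

theorem mainTheorem11:
  fixes B :: "'b set" and E :: "'e set" and F :: "('b + 'e) rel" and c :: "'b set"
  assumes "occurrence_net B E F c"
  shows "occurrence_causal_net (CO_S E F) E (CO_F E F) (CO_I E F) {} (CO_m E F) (id :: 'e \<Rightarrow> 'e)"
  using assms inj_on_id by (rule occurrence_causal_net_CO)

end
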